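(* Let $n,m\ge1$, $c_1,\dots,c_n>0$, $T>0$, $\epsilon>0$, $\kappa_{ij}\ge0$, $\bar r_1,\dots,\bar r_m>0$ and $R=\prod_{i=1}^m[0,\bar r_i]$. For $r\in R$ let $$C(X,q,r)=\sum_{i,j}\kappa_{ij}x_{ij}+\sum_j\beta_j(q_j)+\epsilon\sum_{i,j}x_{ij}\log\Big(\frac{x_{ij}}{r_i}\Big),$$ where $\beta_j(q_j)=0$ for $q_j\le c_j$ and $\beta_j(q_j)=q_j-c_j-c_j\log(q_j/c_j)$ for $q_j>c_j$, and let $\mathcal{C}(r)$ be the minimum of $C(X,q,r)$ over $(X,q)\in\mathbb{R}^{m\times n}\times\mathbb{R}^n$ satisfying $x_{ij}\ge0$, $\sum_jx_{ij}=r_i$ for all $i$, and $\sum_ix_{ij}=q_j/T$ for all $j$. Then $\mathcal{C}$ is convex on $R$.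
   Context: Conventions: $0\log0=0$ and terms with $x_{ij}=0$ (in particular all terms with $r_i=0$, which force $x_{ij}=0$) contribute zero to the entropy term; equivalently the entropy term is $\epsilon\sum_i r_i\sum_j\delta_{ij}\log\delta_{ij}$ with $\delta_{ij}=x_{ij}/r_i$. *)

theory Defs
  imports "HOL-Analysis.Analysis"
begin

definition beta :: "real \<Rightarrow> real \<Rightarrow> real" where
  "beta c q = (if q \<le> c then 0 else q - c - c * ln (q / c))"

definition xlog :: "real \<Rightarrow> real \<Rightarrow> real" where
  "xlog x r = (if x = 0 then 0 else x * ln (x / r))"

definition cost :: "real \<Rightarrow> real^'n^'m \<Rightarrow> real^'n \<Rightarrow> real^'n^'m \<Rightarrow> real^'n \<Rightarrow> real^'m \<Rightarrow> real" where
  "cost eps kappa c X q r =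
     (\<Sum>i\<in>UNIV. \<Sum>j\<in>UNIV. kappa$i$j * X$i$j)
     + (\<Sum>j\<in>UNIV. beta (c$j) (q$j))
     + eps * (\<Sum>i\<in>UNIV. \<Sum>j\<in>UNIV. xlog (X$i$j) (r$i))"

definition feasible :: "real \<Rightarrow> real^'n^'m \<Rightarrow> real^'n \<Rightarrow> real^'m \<Rightarrow> bool" where
  "feasible T X q r \<longleftrightarrow>
     (\<forall>i j. 0 \<le> X$i$j) \<and> (\<forall>i. (\<Sum>j\<in>UNIV. X$i$j) = r$i) \<and> (\<forall>j. (\<Sum>i\<in>UNIV. X$i$j) = q$j / T)"

text \<open>Optimal cost \<C>(r): the minimum (= infimum, since it is attained) of C over the feasible set.\<close>
definition opt_cost :: "real \<Rightarrow> real \<Rightarrow> real^'n^'m \<Rightarrow> real^'n \<Rightarrow> real^'m \<Rightarrow> real" where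
  "opt_cost T eps kappa c r = Inf {cost eps kappa c X q r | X q. feasible T X q r}"

end

theory Submission
  imports Defs
begin

text \<open>
  The cost C(X, q, r) is jointly convex in (X, q, r) on the feasible set: the transport term
  is linear, the congestion penalty \<beta> is a nondecreasing convex function of
  max q c, and the entropy term x log(x/r) is the perspective of a convex function, jointly
  convex by the log-sum inequality. The feasibility constraints are linear, so the convex
  combination of feasible plans for r and s is feasible for the combination of r and s.
  Minimising a jointly convex function over one group of variables leaves a convex function
  of the others.
\<close>

lemma convex_on_Inf_familyI:
  fixes S :: "'a::real_vector \<Rightarrow> real set"
  assumes "convex R"
    and nonempty: "\<And>r. r \<in> R \<Longrightarrow> S r \<noteq> {}"
    and bounded: "\<And>r. r \<in> R \<Longrightarrow> bdd_below (S r)"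
    and combine: "\<And>r s a b t. r \<in> R \<Longrightarrow> s \<in> R \<Longrightarrow> a \<in> S r \<Longrightarrow> b \<in> S s \<Longrightarrow> 0 < t \<Longrightarrow> t < 1 \<Longrightarrow>
      \<exists>c \<in> S ((1 - t) *\<^sub>R r + t *\<^sub>R s). c \<le> (1 - t) * a + t * b"
  shows "convex_on R (\<lambda>r. Inf (S r))"
proof (rule convex_onI[OF _ \<open>convex R\<close>])
  fix t :: real and r s
  assume t: "0 < t" "t < 1" and r: "r \<in> R" and s: "s \<in> R"
  define z where "z = (1 - t) *\<^sub>R r + t *\<^sub>R s"
  have "z \<in> R"
    using \<open>convex R\<close> r s t by (simp add: z_def convex_alt)
  have "Inf (S z) \<le> (1 - t) * a + t * b" if ab: "a \<in> S r" "b \<in> S s" for a b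
  proof -
    obtain c where "c \<in> S z" "c \<le> (1 - t) * a + t * b"
      using combine[OF r s ab t] unfolding z_def by blast
    then show ?thesis
      using cInf_lower[OF _ bounded[OF \<open>z \<in> R\<close>]] by fastforce
  qed
  then have "(Inf (S z) - t * b) / (1 - t) \<le> Inf (S r)" if "b \<in> S s" for b
    using t that by (intro cInf_greatest nonempty r) (simp add: field_simps)
  then have "(Inf (S z) - (1 - t) * Inf (S r)) / t \<le> Inf (S s)"
    using t by (intro cInf_greatest nonempty s) (simp add: field_simps)
  then show "Inf (S z) \<le> (1 - t) * Inf (S r) + t * Inf (S s)"
    using t by (simp add: field_simps)
qed

lemma convex_on_mono_comp:
  fixes f :: "'a::real_vector \<Rightarrow> real"
  assumes f: "convex_on S f" and g: "convex_on I g" "mono_on I g" and "f ` S \<subseteq> I"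
  shows "convex_on S (g \<circ> f)"
proof (rule convex_onI[OF _ convex_on_imp_convex[OF f]])
  fix t :: real and x y
  assume t: "0 < t" "t < 1" and "x \<in> S" "y \<in> S"
  then have "(1 - t) *\<^sub>R x + t *\<^sub>R y \<in> S" and fx: "f x \<in> I" and fy: "f y \<in> I"
    using convex_on_imp_convex[OF f] \<open>f ` S \<subseteq> I\<close> by (auto simp: convex_alt)
  then have "(1 - t) *\<^sub>R f x + t *\<^sub>R f y \<in> I"
    using convex_on_imp_convex[OF g(1)] t by (simp add: convex_alt)
  moreover have "f ((1 - t) *\<^sub>R x + t *\<^sub>R y) \<le> (1 - t) * f x + t * f y"
    using convex_onD[OF f] t \<open>x \<in> S\<close> \<open>y \<in> S\<close> by simp
  ultimately have "g (f ((1 - t) *\<^sub>R x + t *\<^sub>R y)) \<le> g ((1 - t) * f x + t * f y)"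
    using \<open>(1 - t) *\<^sub>R x + t *\<^sub>R y \<in> S\<close> \<open>f ` S \<subseteq> I\<close> by (intro mono_onD[OF g(2)]) auto
  also have "\<dots> \<le> (1 - t) * g (f x) + t * g (f y)"
    using convex_onD[OF g(1)] t fx fy by simp
  finally show "(g \<circ> f) ((1 - t) *\<^sub>R x + t *\<^sub>R y) \<le> (1 - t) * (g \<circ> f) x + t * (g \<circ> f) y"
    by simp
qed

lemma convex_on_max_const: "convex_on UNIV (\<lambda>x::real. max x c)"
proof (rule convex_onI)
  fix t x y :: real
  assume "0 < t" "t < 1"
  then have "(1 - t) * x + t * y \<le> (1 - t) * max x c + t * max y c"
    and "(1 - t) * c + t * c \<le> (1 - t) * max x c + t * max y c"
    by (intro add_mono mult_left_mono; simp)+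
  moreover have "(1 - t) * c + t * c = c"
    by (simp add: algebra_simps)
  ultimately show "max ((1 - t) *\<^sub>R x + t *\<^sub>R y) c \<le> (1 - t) * max x c + t * max y c"
    by simp
qed simp

lemma beta_nonneg:
  assumes "0 < c"
  shows "0 \<le> beta c q"
proof (cases "q \<le> c")
  case False
  then have "c * ln (q / c) \<le> c * (q / c - 1)"
    using assms by (intro mult_left_mono ln_le_minus_one) auto
  also have "\<dots> = q - c"
    using assms by (simp add: field_simps)
  finally show ?thesis
    using False by (simp add: beta_def)
qed (simp add: beta_def)

lemma beta_convex:
  assumes "0 < c"
  shows "convex_on UNIV (beta c)"
proof -
  define g where "g q = q - c - c * ln (q / c)" for q
  have g_deriv: "(g has_real_derivative 1 - c / q) (at q)" if "c \<le> q" for q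
    using that assms unfolding g_def
    by (auto intro!: derivative_eq_intros simp: field_simps)
  have "convex_on {c..} g"
    using g_deriv assms by (intro convex_on_realI[where f' = "\<lambda>q. 1 - c / q"]) (auto simp: frac_le)
  moreover have "mono_on {c..} g"
  proof (rule mono_onI)
    fix x y
    assume "x \<in> {c..}" "y \<in> {c..}" "x \<le> y"
    have "\<exists>d. (g has_real_derivative d) (at z) \<and> 0 \<le> d" if "x \<le> z" for z
      using g_deriv[of z] that \<open>x \<in> {c..}\<close> assms
      by (intro exI[of _ "1 - c / z"]) (simp add: field_simps)
    then show "g x \<le> g y"
      using DERIV_nonneg_imp_nondecreasing[OF \<open>x \<le> y\<close>] by blast
  qed
  ultimately have "convex_on UNIV (g \<circ> (\<lambda>q. max q c))"
    by (intro convex_on_mono_comp[OF convex_on_max_const]) auto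
  moreover have "g \<circ> (\<lambda>q. max q c) = beta c"
    using assms by (auto simp: g_def beta_def max_def)
  ultimately show ?thesis
    by simp
qed

lemma xlog_ge_neg:
  assumes "0 \<le> x" "0 \<le> r"
  shows "- r \<le> xlog x r"
proof (cases "x = 0 \<or> r = 0")
  case False
  then have "x * ln (r / x) \<le> x * (r / x - 1)"
    using assms by (intro mult_left_mono ln_le_minus_one) auto
  also have "\<dots> = r - x"
    using False by (simp add: field_simps)
  finally have "x * ln (r / x) \<le> r - x" .
  moreover have "ln (x / r) = - ln (r / x)"
    using assms False by (simp add: ln_div)
  ultimately show ?thesis
    using False assms by (simp add: xlog_def)
qed (use assms in \<open>auto simp: xlog_def\<close>)

lemma xlog_mult_mult: "xlog (t * x) (t * r) = t * xlog x r"
  by (cases "t = 0") (auto simp: xlog_def)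

lemma log_sum_inequality:
  fixes a b c d :: real
  assumes "0 < a" "0 < b" "0 < c" "0 < d"
  shows "(a + b) * ln ((a + b) / (c + d)) \<le> a * ln (a / c) + b * ln (b / d)"
proof -
  have "0 < a + b"
    using assms by simp
  then have weight: "1 - b / (a + b) = a / (a + b)"
    by (simp add: field_simps)
  have "a / (a + b) * ln (c / a) + b / (a + b) * ln (d / b)
      \<le> ln (a / (a + b) * (c / a) + b / (a + b) * (d / b))"
    using concave_onD[OF ln_concave, of "b / (a + b)" "c / a" "d / b"] assms
    by (simp add: weight)
  also have "a / (a + b) * (c / a) + b / (a + b) * (d / b) = (c + d) / (a + b)"
    using assms by (simp add: add_divide_distrib)
  finally have "(a + b) * (a / (a + b) * ln (c / a) + b / (a + b) * ln (d / b))
      \<le> (a + b) * ln ((c + d) / (a + b))"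
    using \<open>0 < a + b\<close> by (intro mult_left_mono) auto
  then have "a * ln (c / a) + b * ln (d / b) \<le> (a + b) * ln ((c + d) / (a + b))"
    using \<open>0 < a + b\<close> by (simp add: distrib_left)
  then show ?thesis
    using assms by (simp add: ln_div algebra_simps)
qed

text \<open>The side conditions exclude x > 0 = r, where xlog x r takes the junk value 0 because ln 0 = 0.\<close>

lemma xlog_add_le:
  assumes "0 \<le> a" "0 \<le> b" "0 \<le> c" "0 \<le> d" "0 < a \<Longrightarrow> 0 < c" "0 < b \<Longrightarrow> 0 < d"
  shows "xlog (a + b) (c + d) \<le> xlog a c + xlog b d"
proof -
  consider "a = 0" | "b = 0" | "0 < a" "0 < b"
    using assms by linarith
  then show ?thesis
  proof cases
    case 1
    then have "b * ln (b / (c + d)) \<le> b * ln (b / d)" if "0 < b"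
      using that assms by (intro mult_left_mono ln_mono frac_le) auto
    with 1 assms show ?thesis by (auto simp: xlog_def)
  next
    case 2
    then have "a * ln (a / (c + d)) \<le> a * ln (a / c)" if "0 < a"
      using that assms by (intro mult_left_mono ln_mono frac_le) auto
    with 2 assms show ?thesis by (auto simp: xlog_def)
  next
    case 3
    with assms log_sum_inequality[of a b c d] show ?thesis by (simp add: xlog_def)
  qed
qed

lemma xlog_convex_combination:
  assumes "0 \<le> x" "x \<le> r" "0 \<le> y" "y \<le> s" "0 \<le> t" "t \<le> 1"
  shows "xlog ((1 - t) * x + t * y) ((1 - t) * r + t * s) \<le> (1 - t) * xlog x r + t * xlog y s"
  using xlog_add_le[of "(1 - t) * x" "t * y" "(1 - t) * r" "t * s"] assms
  by (simp add: xlog_mult_mult zero_less_mult_iff)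

lemma sum_convex_combination_le:
  fixes f g h :: "'a \<Rightarrow> real"
  assumes "\<And>i. i \<in> A \<Longrightarrow> h i \<le> (1 - t) * f i + t * g i"
  shows "sum h A \<le> (1 - t) * sum f A + t * sum g A"
proof -
  have "sum h A \<le> (\<Sum>i\<in>A. (1 - t) * f i + t * g i)"
    using assms by (rule sum_mono)
  then show ?thesis
    by (simp add: sum.distrib sum_distrib_left)
qed

lemma feasible_entry_bounds:
  assumes "feasible T X q r"
  shows "0 \<le> X$i$j" "X$i$j \<le> r$i"
proof -
  show "0 \<le> X$i$j"
    using assms by (simp add: feasible_def)
  have "X$i$j \<le> (\<Sum>j\<in>UNIV. X$i$j)"
    using assms by (intro member_le_sum) (auto simp: feasible_def)
  then show "X$i$j \<le> r$i"
    using assms by (simp add: feasible_def)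
qed

lemma feasible_exists:
  assumes "T \<noteq> 0" "\<forall>i. 0 \<le> r$i"
  shows "\<exists>(X::real^'n^'m) q. feasible T X q r"
proof -
  define X :: "real^'n^'m" where "X = (\<chi> i j. r$i / CARD('n))"
  have "feasible T X (\<chi> j. T * (\<Sum>i\<in>UNIV. X$i$j)) r"
    using assms by (simp add: feasible_def X_def)
  then show ?thesis
    by blast
qed

lemma feasible_convex_combination:
  assumes "feasible T X q r" "feasible T Y p s" "0 \<le> t" "t \<le> 1"
  shows "feasible T ((1 - t) *\<^sub>R X + t *\<^sub>R Y) ((1 - t) *\<^sub>R q + t *\<^sub>R p) ((1 - t) *\<^sub>R r + t *\<^sub>R s)"
  using assms unfolding feasible_def
  by (auto simp: sum.distrib sum_distrib_left[symmetric] add_divide_distrib)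

lemma cost_lower_bound:
  fixes kappa :: "real^'n^'m"
  assumes "\<forall>j. 0 < c$j" "0 \<le> eps" "\<forall>i j. 0 \<le> kappa$i$j" and X: "feasible T X q r"
  shows "- eps * real CARD('n) * (\<Sum>i\<in>UNIV. r$i) \<le> cost eps kappa c X q r"
proof -
  note X_bounds = feasible_entry_bounds[OF X]
  have "0 \<le> (\<Sum>i\<in>UNIV. \<Sum>j\<in>UNIV. kappa$i$j * X$i$j)"
    using assms X_bounds by (intro sum_nonneg mult_nonneg_nonneg) auto
  moreover have "0 \<le> (\<Sum>j\<in>UNIV. beta (c$j) (q$j))"
    using assms by (intro sum_nonneg beta_nonneg) auto
  moreover have "(\<Sum>i\<in>UNIV. \<Sum>j\<in>(UNIV::'n set). - r$i) \<le> (\<Sum>i\<in>UNIV. \<Sum>j\<in>UNIV. xlog (X$i$j) (r$i))"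
    using X_bounds order_trans[OF X_bounds] by (intro sum_mono xlog_ge_neg)
  then have "eps * (\<Sum>i\<in>UNIV. \<Sum>j\<in>(UNIV::'n set). - r$i)
      \<le> eps * (\<Sum>i\<in>UNIV. \<Sum>j\<in>UNIV. xlog (X$i$j) (r$i))"
    using assms by (intro mult_left_mono) auto
  ultimately show ?thesis
    by (simp add: cost_def sum_negf sum_distrib_left mult.commute mult.left_commute)
qed

lemma cost_convex_combination:
  fixes kappa :: "real^'n^'m"
  assumes "\<forall>j. 0 < c$j" "0 \<le> eps" "0 \<le> t" "t \<le> 1"
    and XY: "feasible T X q r" "feasible T Y p s"
  shows "cost eps kappa c ((1 - t) *\<^sub>R X + t *\<^sub>R Y) ((1 - t) *\<^sub>R q + t *\<^sub>R p) ((1 - t) *\<^sub>R r + t *\<^sub>R s)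
    \<le> (1 - t) * cost eps kappa c X q r + t * cost eps kappa c Y p s"
proof -
  let ?Z = "(1 - t) *\<^sub>R X + t *\<^sub>R Y" and ?o = "(1 - t) *\<^sub>R q + t *\<^sub>R p"
    and ?u = "(1 - t) *\<^sub>R r + t *\<^sub>R s"
  have transport: "(\<Sum>i\<in>UNIV. \<Sum>j\<in>UNIV. kappa$i$j * ?Z$i$j)
      \<le> (1 - t) * (\<Sum>i\<in>UNIV. \<Sum>j\<in>UNIV. kappa$i$j * X$i$j) + t * (\<Sum>i\<in>UNIV. \<Sum>j\<in>UNIV. kappa$i$j * Y$i$j)"
    by (intro sum_convex_combination_le) (simp add: algebra_simps)
  have congestion: "(\<Sum>j\<in>UNIV. beta (c$j) (?o$j))
      \<le> (1 - t) * (\<Sum>j\<in>UNIV. beta (c$j) (q$j)) + t * (\<Sum>j\<in>UNIV. beta (c$j) (p$j))"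
    using assms convex_onD[OF beta_convex] by (intro sum_convex_combination_le) simp
  have "(\<Sum>i\<in>UNIV. \<Sum>j\<in>UNIV. xlog (?Z$i$j) (?u$i))
      \<le> (1 - t) * (\<Sum>i\<in>UNIV. \<Sum>j\<in>UNIV. xlog (X$i$j) (r$i)) + t * (\<Sum>i\<in>UNIV. \<Sum>j\<in>UNIV. xlog (Y$i$j) (s$i))"
    using assms feasible_entry_bounds[OF XY(1)] feasible_entry_bounds[OF XY(2)]
    by (intro sum_convex_combination_le) (simp add: xlog_convex_combination)
  then have "eps * (\<Sum>i\<in>UNIV. \<Sum>j\<in>UNIV. xlog (?Z$i$j) (?u$i))
      \<le> eps * ((1 - t) * (\<Sum>i\<in>UNIV. \<Sum>j\<in>UNIV. xlog (X$i$j) (r$i))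
        + t * (\<Sum>i\<in>UNIV. \<Sum>j\<in>UNIV. xlog (Y$i$j) (s$i)))"
    using \<open>0 \<le> eps\<close> by (rule mult_left_mono)
  also have "\<dots> = (1 - t) * (eps * (\<Sum>i\<in>UNIV. \<Sum>j\<in>UNIV. xlog (X$i$j) (r$i)))
        + t * (eps * (\<Sum>i\<in>UNIV. \<Sum>j\<in>UNIV. xlog (Y$i$j) (s$i)))"
    by (simp add: algebra_simps)
  finally show ?thesis
    using transport congestion unfolding cost_def distrib_left by linarith
qed

lemma feasible_cost_convex_combination:
  fixes kappa :: "real^'n^'m"
  assumes "\<forall>j. 0 < c$j" "0 \<le> eps" "0 \<le> t" "t \<le> 1"
    and "a \<in> {cost eps kappa c X q r |X q. feasible T X q r}"
    and "b \<in> {cost eps kappa c X q s |X q. feasible T X q s}"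
  shows "\<exists>z \<in> {cost eps kappa c X q ((1 - t) *\<^sub>R r + t *\<^sub>R s) |X q.
      feasible T X q ((1 - t) *\<^sub>R r + t *\<^sub>R s)}. z \<le> (1 - t) * a + t * b"
proof -
  obtain X q Y p where XY: "feasible T X q r" "feasible T Y p s"
    and ab: "a = cost eps kappa c X q r" "b = cost eps kappa c Y p s"
    using assms(5,6) by blast
  let ?Z = "(1 - t) *\<^sub>R X + t *\<^sub>R Y" and ?o = "(1 - t) *\<^sub>R q + t *\<^sub>R p"
    and ?u = "(1 - t) *\<^sub>R r + t *\<^sub>R s"
  have "feasible T ?Z ?o ?u"
    using XY assms by (intro feasible_convex_combination)
  moreover have "cost eps kappa c ?Z ?o ?u \<le> (1 - t) * a + t * b"
    unfolding ab using XY assms by (intro cost_convex_combination)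
  ultimately show ?thesis
    by (intro bexI[of _ "cost eps kappa c ?Z ?o ?u"]) blast+
qed

theorem proposition4:
  fixes c :: "real^'n" and kappa :: "real^'n^'m" and rbar :: "real^'m"
    and T eps :: real
  assumes "\<forall>j. c$j > 0" and "T > 0" and "eps > 0"
    and "\<forall>i j. kappa$i$j \<ge> 0" and "\<forall>i. rbar$i > 0"
  shows "convex_on {r :: real^'m. \<forall>i. 0 \<le> r$i \<and> r$i \<le> rbar$i} (opt_cost T eps kappa c)"
  unfolding opt_cost_def
proof (rule convex_on_Inf_familyI)
  show "convex {r :: real^'m. \<forall>i. 0 \<le> r$i \<and> r$i \<le> rbar$i}"
    by (rule convex_box_cart) (simp flip: atLeastAtMost_iff)
next
  fix r :: "real^'m"
  assume "r \<in> {r. \<forall>i. 0 \<le> r$i \<and> r$i \<le> rbar$i}"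
  then show "{cost eps kappa c X q r |X q. feasible T X q r} \<noteq> {}"
    using feasible_exists[of T r] \<open>T > 0\<close> by auto
  show "bdd_below {cost eps kappa c X q r |X q. feasible T X q r}"
    using cost_lower_bound[OF assms(1) _ assms(4)] \<open>eps > 0\<close>
    by (intro bdd_belowI[of _ "- eps * real CARD('n) * (\<Sum>i\<in>UNIV. r$i)"]) auto
qed (rule feasible_cost_convex_combination; use assms in auto)

end
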